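(* Let $\xi=\xi_{\{\mu\}}$ be a GCKV on $\mathbb{E}^2$, not identically zero, with parameters $\mu=(\mu_0,\mu_1,\mu_2)$ in the coordinates $\{z,\bar z\}$. Let $U\subset\mathbb{R}^4\setminus\{0\}$ be the set of $u$ such that $\xi$ is a Killing vector of the metric $g_u$. Then: - If $2\mu_0\mu_2-\mu_1^2\notin\mathbb{R}$, then $U=\emptyset$. - If $2\mu_0\mu_2-\mu_1^2\in\mathbb{R}$, let $\gamma,\delta\in\mathbb{C}$ be any pair with $\frac12\delta^2\mu_2-\gamma\delta\mu_1+\gamma^2\mu_0=1$, set $\alpha=\frac12(\delta\mu_2-\gamma\mu_1)$, $\beta=\frac12\delta\mu_1-\gamma\mu_0$ and $\mathbb{A}=\begin{pmatrix}\alpha&\beta\\ \gamma&\delta\end{pmatrix}$. Then $u\in U$ if and only if $$(u_0,u_1,u_2,u_3)^T=\mathcal{O}(\mathbb{A})^T\Big(s_1\big(\tfrac14(2\mu_0\mu_2-\mu_1^2)+1\big),\ s_1\big(\tfrac14(2\mu_0\mu_2-\mu_1^2)-1\big),\ 0,\ s_2\Big)^T$$ for some $(s_1,s_2)\in\mathbb{R}^2\setminus\{0\}$. Moreover, such $g_u$ has constant Gauss curvature $s_1^2(2\mu_0\mu_2-\mu_1^2)-s_2^2$.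
   Context: $\mathbb{E}^2$ has Cartesian coordinates $\{x,y\}$, $z=\frac12(x-iy)$. A GCKV with parameters $\mu\in\mathbb{C}^3$ is $\xi_{\{\mu\}}=(\mu_0+\mu_1z+\frac12\mu_2z^2)\partial_z+(\bar\mu_0+\bar\mu_1\bar z+\frac12\bar\mu_2\bar z^2)\partial_{\bar z}$. For $u=(u_0,u_1,u_2,u_3)\in\mathbb{R}^4\setminus\{0\}$, $g_u:=\Omega_u^{-2}(dx^2+dy^2)$ with $\Omega_u=u_0+u_1+u_2x+u_3y+\frac14(u_0-u_1)(x^2+y^2)$ (on the set where $\Omega_u\ne0$). For $\mathbb{A}\in SL(2,\mathbb{C})$, $\mathcal{O}(\mathbb{A})=\frac12M$ where the rows of $M$ are: row 0: $\big(\alpha\bar\alpha+\beta\bar\beta+\gamma\bar\gamma+\delta\bar\delta,\ -\alpha\bar\alpha+\beta\bar\beta-\gamma\bar\gamma+\delta\bar\delta,\ \alpha\bar\beta+\beta\bar\alpha+\gamma\bar\delta+\delta\bar\gamma,\ i(-\alpha\bar\beta+\beta\bar\alpha-\gamma\bar\delta+\delta\bar\gamma)\big)$; row 1: $\big(-\alpha\bar\alpha-\beta\bar\beta+\gamma\bar\gamma+\delta\bar\delta,\ \alpha\bar\alpha-\beta\bar\beta-\gamma\bar\gamma+\delta\bar\delta,\ -\alpha\bar\beta-\beta\bar\alpha+\gamma\bar\delta+\delta\bar\gamma,\ i(\alpha\bar\beta-\beta\bar\alpha-\gamma\bar\delta+\delta\bar\gamma)\big)$; row 2: $\big(\alpha\bar\gamma+\beta\bar\delta+\gamma\bar\alpha+\delta\bar\beta,\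 -\alpha\bar\gamma+\beta\bar\delta-\gamma\bar\alpha+\delta\bar\beta,\ \alpha\bar\delta+\beta\bar\gamma+\gamma\bar\beta+\delta\bar\alpha,\ i(-\alpha\bar\delta+\beta\bar\gamma-\gamma\bar\beta+\delta\bar\alpha)\big)$; row 3: $\big(i(\alpha\bar\gamma+\beta\bar\delta-\gamma\bar\alpha-\delta\bar\beta),\ i(-\alpha\bar\gamma+\beta\bar\delta+\gamma\bar\alpha-\delta\bar\beta),\ i(\alpha\bar\delta+\beta\bar\gamma-\gamma\bar\beta-\delta\bar\alpha),\ \alpha\bar\delta-\beta\bar\gamma-\gamma\bar\beta+\delta\bar\alpha\big)$. *)

theory Defs
  imports "HOL-Analysis.Analysis"
begin

definition pd :: "nat \<Rightarrow> (real \<times> real \<Rightarrow> real) \<Rightarrow> real \<times> real \<Rightarrow> real" where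
  "pd k f p = (if k = 0 then deriv (\<lambda>t. f (t, snd p)) (fst p)
                         else deriv (\<lambda>t. f (fst p, t)) (snd p))"

definition zc :: "real \<times> real \<Rightarrow> complex" where
  "zc p = (complex_of_real (fst p) - \<i> * complex_of_real (snd p)) / 2"

text \<open>Coefficient of d/dz in xi_mu.\<close>
definition gckv_coeff :: "complex \<Rightarrow> complex \<Rightarrow> complex \<Rightarrow> real \<times> real \<Rightarrow> complex" where
  "gckv_coeff m0 m1 m2 p = m0 + m1 * zc p + m2 * (zc p)^2 / 2"

text \<open>Real components of xi = a d/dz + conj(a) d/dzbar. Since x = z + zbar and
  y = i (z - zbar), one has d/dz = d/dx + i d/dy and d/dzbar = d/dx - i d/dy, so the
  x-component is a + conj a and the y-component is i (a - conj a).\<close>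
definition gckv :: "complex \<Rightarrow> complex \<Rightarrow> complex \<Rightarrow> nat \<Rightarrow> real \<times> real \<Rightarrow> real" where
  "gckv m0 m1 m2 k p =
     (let a = gckv_coeff m0 m1 m2 p in
      if k = 0 then Re (a + cnj a) else Re (\<i> * (a - cnj a)))"

definition lie_metric ::
  "(nat \<Rightarrow> real \<times> real \<Rightarrow> real) \<Rightarrow> (nat \<Rightarrow> nat \<Rightarrow> real \<times> real \<Rightarrow> real)
    \<Rightarrow> nat \<Rightarrow> nat \<Rightarrow> real \<times> real \<Rightarrow> real" where
  "lie_metric v g i j p =
     (\<Sum>k<2. v k p * pd k (g i j) p + g k j p * pd i (v k) p + g i k p * pd j (v k) p)"

definition killing_on ::
  "(nat \<Rightarrow> real \<times> real \<Rightarrow> real) \<Rightarrow> (nat \<Rightarrow> nat \<Rightarrow> real \<times> real \<Rightarrow> real) \<Rightarrow> (real \<times> real) set \<Rightarrow> bool" where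
  "killing_on v g D \<longleftrightarrow> (\<forall>p\<in>D. \<forall>i<2. \<forall>j<2. lie_metric v g i j p = 0)"

definition det3 :: "real \<Rightarrow> real \<Rightarrow> real \<Rightarrow> real \<Rightarrow> real \<Rightarrow> real \<Rightarrow> real \<Rightarrow> real \<Rightarrow> real \<Rightarrow> real" where
  "det3 a b c d e f g h i = a*(e*i - f*h) - b*(d*i - f*g) + c*(d*h - e*g)"

text \<open>Gauss curvature via the Brioschi formula, with E = g00, F = g01, G = g11,
  u = x, v = y.\<close>
definition gauss_curvature :: "(nat \<Rightarrow> nat \<Rightarrow> real \<times> real \<Rightarrow> real) \<Rightarrow> real \<times> real \<Rightarrow> real" where
  "gauss_curvature g p =
    (let E = g 0 0; F = g 0 1; G = g 1 1;
         Ep = E p; Fp = F p; Gp = G p;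
         Eu = pd 0 E p; Ev = pd 1 E p; Fu = pd 0 F p; Fv = pd 1 F p;
         Gu = pd 0 G p; Gv = pd 1 G p;
         Evv = pd 1 (pd 1 E) p; Fuv = pd 1 (pd 0 F) p; Guu = pd 0 (pd 0 G) p
     in (det3 (- Evv / 2 + Fuv - Guu / 2) (Eu / 2) (Fu - Ev / 2)
              (Fv - Gu / 2) Ep Fp
              (Gv / 2) Fp Gp
         - det3 0 (Ev / 2) (Gu / 2)
              (Ev / 2) Ep Fp
              (Gu / 2) Fp Gp) / (Ep * Gp - Fp^2)^2)"

definition Omega :: "real \<times> real \<times> real \<times> real \<Rightarrow> real \<times> real \<Rightarrow> real" where
  "Omega u p = (case u of (u0, u1, u2, u3) \<Rightarrow>
     u0 + u1 + u2 * fst p + u3 * snd p + (u0 - u1) * ((fst p)^2 + (snd p)^2) / 4)"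

definition gmet :: "real \<times> real \<times> real \<times> real \<Rightarrow> nat \<Rightarrow> nat \<Rightarrow> real \<times> real \<Rightarrow> real" where
  "gmet u i j p = (if i = j then 1 / (Omega u p)^2 else 0)"

definition dom_u :: "real \<times> real \<times> real \<times> real \<Rightarrow> (real \<times> real) set" where
  "dom_u u = {p. Omega u p \<noteq> 0}"

definition killing_set :: "complex \<Rightarrow> complex \<Rightarrow> complex \<Rightarrow> (real \<times> real \<times> real \<times> real) set" where
  "killing_set m0 m1 m2 =
     {u. u \<noteq> (0, 0, 0, 0) \<and> killing_on (gckv m0 m1 m2) (gmet u) (dom_u u)}"

definition Omat :: "complex \<Rightarrow> complex \<Rightarrow> complex \<Rightarrow> complex \<Rightarrow> nat \<Rightarrow> nat \<Rightarrow> complex" where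
  "Omat a b c d r k = (1/2) * (
    if r = 0 then
      (if k = 0 then a*cnj a + b*cnj b + c*cnj c + d*cnj d
       else if k = 1 then - a*cnj a + b*cnj b - c*cnj c + d*cnj d
       else if k = 2 then a*cnj b + b*cnj a + c*cnj d + d*cnj c
       else \<i> * (- a*cnj b + b*cnj a - c*cnj d + d*cnj c))
    else if r = 1 then
      (if k = 0 then - a*cnj a - b*cnj b + c*cnj c + d*cnj d
       else if k = 1 then a*cnj a - b*cnj b - c*cnj c + d*cnj d
       else if k = 2 then - a*cnj b - b*cnj a + c*cnj d + d*cnj c
       else \<i> * (a*cnj b - b*cnj a - c*cnj d + d*cnj c))
    else if r = 2 then
      (if k = 0 then a*cnj c + b*cnj d + c*cnj a + d*cnj b
       else if k = 1 then - a*cnj c + b*cnj d - c*cnj a + d*cnj b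
       else if k = 2 then a*cnj d + b*cnj c + c*cnj b + d*cnj a
       else \<i> * (- a*cnj d + b*cnj c - c*cnj b + d*cnj a))
    else
      (if k = 0 then \<i> * (a*cnj c + b*cnj d - c*cnj a - d*cnj b)
       else if k = 1 then \<i> * (- a*cnj c + b*cnj d + c*cnj a - d*cnj b)
       else if k = 2 then \<i> * (a*cnj d + b*cnj c - c*cnj b - d*cnj a)
       else a*cnj d - b*cnj c - c*cnj b + d*cnj a))"

definition tup :: "real \<times> real \<times> real \<times> real \<Rightarrow> nat \<Rightarrow> real" where
  "tup u j = (case u of (u0, u1, u2, u3) \<Rightarrow>
     if j = 0 then u0 else if j = 1 then u1 else if j = 2 then u2 else u3)"

text \<open>u = O(A)^T w, i.e. u_k = sum_r O(A)_{r k} w_r.\<close>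
definition eq_OT :: "complex \<Rightarrow> complex \<Rightarrow> complex \<Rightarrow> complex \<Rightarrow>
     real \<times> real \<times> real \<times> real \<Rightarrow> real \<times> real \<times> real \<times> real \<Rightarrow> bool" where
  "eq_OT a b c d u w \<longleftrightarrow>
     (\<forall>k<4. complex_of_real (tup u k) = (\<Sum>r<4. Omat a b c d r k * complex_of_real (tup w r)))"

end

theory Submission
  imports Defs
begin

(* The conformal factor Omega_u of g_u is the Hermitian form of a Hermitian matrix H_u whose
   determinant is the Lorentz square u0^2 - u1^2 - u2^2 - u3^2, and O(A) is the map
   H -> A^H H A written in the coordinates u.  The GCKV xi_mu generates the Moebius flow of a
   traceless matrix X, so it is conformal for every g_u, its Lie derivative being a multiple of
   the Hermitian form of H_u X + X^H H_u.  Since the zero set of Omega_u has empty interior, xi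
   is a Killing vector of g_u exactly when H_u X + X^H H_u = 0.  If det X = (2 mu0 mu2 - mu1^2)/4
   is not real, this linear system in u has only the trivial solution.  Otherwise A in SL(2,C)
   conjugates X to Y = [[0, q/4], [-1, 0]], and the solutions are H_u = A^H H A with H running
   through the two-parameter family of solutions of H Y + Y^H H = 0.  Finally, the Gauss
   curvature of g_u is Omega Delta(Omega) - |grad Omega|^2 = det H_u, which is invariant under
   congruence by A. *)

section \<open>Complex 2x2 matrices\<close>

(* (a, b, c, d) is the matrix [[a, b], [c, d]]. *)
type_synonym cmat2 = "complex \<times> complex \<times> complex \<times> complex"

fun mat2_mult :: "cmat2 \<Rightarrow> cmat2 \<Rightarrow> cmat2" where
  "mat2_mult (a, b, c, d) (a', b', c', d') =
     (a * a' + b * c', a * b' + b * d', c * a' + d * c', c * b' + d * d')"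

fun mat2_add :: "cmat2 \<Rightarrow> cmat2 \<Rightarrow> cmat2" where
  "mat2_add (a, b, c, d) (a', b', c', d') = (a + a', b + b', c + c', d + d')"

fun mat2_adjoint :: "cmat2 \<Rightarrow> cmat2" where
  "mat2_adjoint (a, b, c, d) = (cnj a, cnj c, cnj b, cnj d)"

fun mat2_adjugate :: "cmat2 \<Rightarrow> cmat2" where
  "mat2_adjugate (a, b, c, d) = (d, - b, - c, a)"

fun mat2_det :: "cmat2 \<Rightarrow> complex" where
  "mat2_det (a, b, c, d) = a * d - b * c"

abbreviation mat2_zero :: cmat2 where "mat2_zero \<equiv> (0, 0, 0, 0)"
abbreviation mat2_one :: cmat2 where "mat2_one \<equiv> (1, 0, 0, 1)"

lemma mat2_mult_assoc: "mat2_mult (mat2_mult A B) C = mat2_mult A (mat2_mult B C)"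
  by (cases A; cases B; cases C) (simp add: algebra_simps)

lemma mat2_mult_add_left: "mat2_mult (mat2_add A B) C = mat2_add (mat2_mult A C) (mat2_mult B C)"
  by (cases A; cases B; cases C) (simp add: algebra_simps)

lemma mat2_mult_add_right: "mat2_mult A (mat2_add B C) = mat2_add (mat2_mult A B) (mat2_mult A C)"
  by (cases A; cases B; cases C) (simp add: algebra_simps)

lemma mat2_mult_zero [simp]: "mat2_mult mat2_zero A = mat2_zero" "mat2_mult A mat2_zero = mat2_zero"
  by (cases A; simp)+

lemma mat2_mult_one [simp]: "mat2_mult mat2_one A = A" "mat2_mult A mat2_one = A"
  by (cases A; simp)+

lemma mat2_adjoint_mult: "mat2_adjoint (mat2_mult A B) = mat2_mult (mat2_adjoint B) (mat2_adjoint A)"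
  by (cases A; cases B) (simp add: algebra_simps)

lemma mat2_adjoint_adjoint [simp]: "mat2_adjoint (mat2_adjoint A) = A"
  by (cases A) simp

lemma mat2_det_mult: "mat2_det (mat2_mult A B) = mat2_det A * mat2_det B"
  by (cases A; cases B) (simp add: algebra_simps)

lemma mat2_det_adjoint: "mat2_det (mat2_adjoint A) = cnj (mat2_det A)"
  by (cases A) simp

definition mat2_congr :: "cmat2 \<Rightarrow> cmat2 \<Rightarrow> cmat2" where
  "mat2_congr A H = mat2_mult (mat2_mult (mat2_adjoint A) H) A"

definition mat2_congr_deriv :: "cmat2 \<Rightarrow> cmat2 \<Rightarrow> cmat2" where
  "mat2_congr_deriv H X = mat2_add (mat2_mult H X) (mat2_mult (mat2_adjoint X) H)"

lemma mat2_congr_one [simp]: "mat2_congr mat2_one H = H"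
  by (simp add: mat2_congr_def)

lemma mat2_congr_zero [simp]: "mat2_congr A mat2_zero = mat2_zero"
  by (simp add: mat2_congr_def)

lemma mat2_congr_congr: "mat2_congr B (mat2_congr A H) = mat2_congr (mat2_mult A B) H"
  by (simp add: mat2_congr_def mat2_adjoint_mult mat2_mult_assoc)

lemma mat2_adjoint_congr: "mat2_adjoint (mat2_congr A H) = mat2_congr A (mat2_adjoint H)"
  by (simp add: mat2_congr_def mat2_adjoint_mult mat2_mult_assoc)

lemma mat2_adjoint_congr_deriv: "mat2_adjoint (mat2_congr_deriv H X) = mat2_congr_deriv (mat2_adjoint H) X"
  by (cases H; cases X) (simp add: mat2_congr_deriv_def algebra_simps)

lemma mat2_adjugate_mult: "mat2_mult (mat2_adjugate A) A = (mat2_det A, 0, 0, mat2_det A)"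
  by (cases A) (simp add: algebra_simps)

lemma mat2_congr_adjugate:
  assumes "mat2_det A = 1"
  shows "mat2_congr A (mat2_congr (mat2_adjugate A) H) = H"
  using assms by (simp add: mat2_congr_congr mat2_adjugate_mult)

lemma mat2_congr_eq_zero_iff:
  assumes "mat2_det A = 1"
  shows "mat2_congr A K = mat2_zero \<longleftrightarrow> K = mat2_zero"
proof -
  have "mat2_det (mat2_adjugate A) = 1"
    using assms by (cases A) (simp add: algebra_simps)
  then show ?thesis
    using mat2_congr_adjugate[of "mat2_adjugate A" K] by (cases A) auto
qed

lemma mat2_congr_deriv_congr:
  assumes "mat2_mult A X = mat2_mult Y A"
  shows "mat2_congr_deriv (mat2_congr A H) X = mat2_congr A (mat2_congr_deriv H Y)"
proof -
  have "mat2_mult (mat2_adjoint X) (mat2_adjoint A) = mat2_mult (mat2_adjoint A) (mat2_adjoint Y)"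
    using assms by (metis mat2_adjoint_mult)
  then show ?thesis
    using assms
    by (simp add: mat2_congr_def mat2_congr_deriv_def mat2_mult_add_left mat2_mult_add_right
        mat2_mult_assoc flip: mat2_mult_assoc[of "mat2_adjoint X"])
qed

section \<open>Hermitian matrices and the parameters u\<close>

(* Omega u p = (cnj z, 1) (herm u) (z, 1)^T for z = zc p. *)
definition herm :: "real \<times> real \<times> real \<times> real \<Rightarrow> cmat2" where
  "herm u = (case u of (u0, u1, u2, u3) \<Rightarrow>
     (of_real (u0 - u1), of_real u2 - \<i> * of_real u3, of_real u2 + \<i> * of_real u3, of_real (u0 + u1)))"

definition herm_coords :: "cmat2 \<Rightarrow> real \<times> real \<times> real \<times> real" where
  "herm_coords H = (case H of (h11, h12, h21, h22) \<Rightarrow>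
     (Re (h22 + h11) / 2, Re (h22 - h11) / 2, Re h21, Im h21))"

definition lorentz_sq :: "real \<times> real \<times> real \<times> real \<Rightarrow> real" where
  "lorentz_sq u = (case u of (u0, u1, u2, u3) \<Rightarrow> u0\<^sup>2 - u1\<^sup>2 - u2\<^sup>2 - u3\<^sup>2)"

lemma herm_coords_herm [simp]: "herm_coords (herm u) = u"
  by (cases u) (simp add: herm_def herm_coords_def)

lemma herm_zero [simp]: "herm (0, 0, 0, 0) = mat2_zero"
  by (simp add: herm_def)

lemma herm_eq_zero_iff [simp]: "herm u = mat2_zero \<longleftrightarrow> u = (0, 0, 0, 0)"
  by (metis herm_coords_herm herm_zero)

lemma mat2_adjoint_herm [simp]: "mat2_adjoint (herm u) = herm u"
  by (cases u) (simp add: herm_def)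

lemma herm_herm_coords:
  assumes "mat2_adjoint H = H"
  shows "herm (herm_coords H) = H"
proof (cases H)
  case (fields h11 h12 h21 h22)
  with assms have "cnj h11 = h11" "cnj h21 = h12" "cnj h22 = h22"
    by auto
  then show ?thesis
    by (auto simp: fields herm_def herm_coords_def complex_eq_iff add_divide_distrib diff_divide_distrib)
qed

lemma mat2_det_herm: "mat2_det (herm u) = of_real (lorentz_sq u)"
  by (cases u) (simp add: herm_def lorentz_sq_def complex_eq_iff power2_eq_square algebra_simps)

lemma mat2_det_congr: "mat2_det (mat2_congr A H) = cnj (mat2_det A) * mat2_det H * mat2_det A"
  by (simp add: mat2_congr_def mat2_det_mult mat2_det_adjoint)

lemma lorentz_sq_congr:
  assumes "mat2_det A = 1" and "herm u = mat2_congr A (herm w)"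
  shows "lorentz_sq u = lorentz_sq w"
proof -
  have "of_real (lorentz_sq u) = (of_real (lorentz_sq w) :: complex)"
    using assms by (simp flip: mat2_det_herm add: mat2_det_congr)
  then show ?thesis
    by simp
qed

lemma congr_deriv_herm_traceless_eq_zero:
  assumes "mat2_congr_deriv (herm u) (a, b, c, - a) = mat2_zero"
    and "Im (mat2_det (a, b, c, - a)) \<noteq> 0"
  shows "u = (0, 0, 0, 0)"
proof -
  obtain u0 u1 u2 u3 where u: "u = (u0, u1, u2, u3)" by (cases u)
  define D where "D = 2 * Re a * Im a + Re b * Im c + Im b * Re c"
  have "D \<noteq> 0"
    using assms(2) by (simp add: D_def algebra_simps)
  have "Re a * (u0 - u1) + Re c * u2 + Im c * u3 = 0"
    "Re b * u2 - Im b * u3 - Re a * (u0 + u1) = 0"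
    "Re b * (u0 - u1) + Re c * (u0 + u1) - 2 * Im a * u3 = 0"
    "Im b * (u0 - u1) - Im c * (u0 + u1) - 2 * Im a * u2 = 0"
    using assms(1) unfolding u mat2_congr_deriv_def herm_def
    by (simp_all add: complex_eq_iff) (elim conjE, algebra)+
  then have "D\<^sup>2 * (u0 - u1) = 0" "D\<^sup>2 * (u0 + u1) = 0" "D\<^sup>2 * u2 = 0" "D\<^sup>2 * u3 = 0"
    unfolding D_def by algebra+
  with \<open>D \<noteq> 0\<close> show ?thesis
    by (simp add: u)
qed

lemma sum_diff_eq_iff:
  fixes x y a b :: "'a :: field_char_0"
  shows "x - y = a - b \<and> x + y = a + b \<longleftrightarrow> x = a \<and> y = b"
  by (auto, algebra+)

lemma mat2_congr_herm_Omat: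
  fixes a b c d :: complex and w :: "real \<times> real \<times> real \<times> real"
  defines "S \<equiv> \<lambda>k. \<Sum>r<4. Omat a b c d r k * of_real (tup w r)"
  shows "mat2_congr (a, b, c, d) (herm w) = (S 0 - S 1, S 2 - \<i> * S 3, S 2 + \<i> * S 3, S 0 + S 1)"
proof -
  have sum4: "(\<Sum>r<4. f r) = f 0 + f 1 + f 2 + f 3" for f :: "nat \<Rightarrow> complex"
    by (simp add: numeral_eq_Suc)
  show ?thesis
    unfolding S_def sum4 by (cases w) (simp add: mat2_congr_def herm_def Omat_def tup_def algebra_simps)
qed

lemma eq_OT_iff_congr: "eq_OT a b c d u w \<longleftrightarrow> herm u = mat2_congr (a, b, c, d) (herm w)"
proof -
  obtain u0 u1 u2 u3 where u: "u = (u0, u1, u2, u3)" by (cases u)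
  define S where "S k = (\<Sum>r<4. Omat a b c d r k * of_real (tup w r))" for k
  have "eq_OT a b c d u w \<longleftrightarrow> of_real u0 = S 0 \<and> of_real u1 = S 1 \<and> of_real u2 = S 2 \<and> of_real u3 = S 3"
    by (simp add: eq_OT_def S_def u tup_def numeral_eq_Suc less_Suc_eq all_conj_distrib)
  also have "\<dots> \<longleftrightarrow> herm u = mat2_congr (a, b, c, d) (herm w)"
    unfolding mat2_congr_herm_Omat S_def[symmetric]
    using sum_diff_eq_iff[of "of_real u0" "of_real u1" "S 0" "S 1"]
      sum_diff_eq_iff[of "of_real u2" "\<i> * of_real u3" "S 2" "\<i> * S 3"]
    by (auto simp: u herm_def)
  finally show ?thesis .
qed

lemma gckv_0:
  "gckv m0 m1 m2 0 (x, y) =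
     2 * Re m0 + Re m1 * x + Im m1 * y + Re m2 * (x\<^sup>2 - y\<^sup>2) / 4 + Im m2 * x * y / 2"
  by (simp add: gckv_def gckv_coeff_def zc_def Let_def power2_eq_square field_simps)

lemma gckv_neq_0:
  "k \<noteq> 0 \<Longrightarrow> gckv m0 m1 m2 k (x, y) =
     - 2 * Im m0 + Re m1 * y - Im m1 * x + Re m2 * x * y / 2 - Im m2 * (x\<^sup>2 - y\<^sup>2) / 4"
  by (simp add: gckv_def gckv_coeff_def zc_def Let_def power2_eq_square field_simps)

lemma pd_0_eqI: "((\<lambda>t. f (t, y)) has_real_derivative D) (at x) \<Longrightarrow> pd 0 f (x, y) = D"
  by (simp add: pd_def DERIV_imp_deriv)

lemma pd_neq_0_eqI: "k \<noteq> 0 \<Longrightarrow> ((\<lambda>t. f (x, t)) has_real_derivative D) (at y) \<Longrightarrow> pd k f (x, y) = D"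
  by (simp add: pd_def DERIV_imp_deriv)

lemma pd_const_zero [simp]: "pd k (\<lambda>p. 0) = (\<lambda>p. 0)"
  by (simp add: pd_def fun_eq_iff)

lemma pd_gckv_0:
  shows "pd 0 (gckv m0 m1 m2 0) (x, y) = Re (m1 + m2 * zc (x, y))"
    and "k \<noteq> 0 \<Longrightarrow> pd k (gckv m0 m1 m2 0) (x, y) = Im (m1 + m2 * zc (x, y))"
  by (intro pd_0_eqI pd_neq_0_eqI; simp only: gckv_0;
      auto intro!: derivative_eq_intros simp: zc_def field_simps)+

lemma pd_gckv_neq_0:
  assumes "j \<noteq> 0"
  shows "pd 0 (gckv m0 m1 m2 j) (x, y) = - Im (m1 + m2 * zc (x, y))"
    and "k \<noteq> 0 \<Longrightarrow> pd k (gckv m0 m1 m2 j) (x, y) = Re (m1 + m2 * zc (x, y))"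
  by (intro pd_0_eqI pd_neq_0_eqI; simp only: gckv_neq_0[OF assms];
      auto intro!: derivative_eq_intros simp: zc_def field_simps)+

lemma Omega_has_real_derivative:
  shows "((\<lambda>t. Omega (u0, u1, u2, u3) (t, y)) has_real_derivative u2 + (u0 - u1) * x / 2) (at x)"
    and "((\<lambda>t. Omega (u0, u1, u2, u3) (x, t)) has_real_derivative u3 + (u0 - u1) * y / 2) (at y)"
  by (auto simp: Omega_def intro!: derivative_eq_intros simp: field_simps)

lemma pd_Omega:
  shows "pd 0 (Omega (u0, u1, u2, u3)) (x, y) = u2 + (u0 - u1) * x / 2"
    and "k \<noteq> 0 \<Longrightarrow> pd k (Omega (u0, u1, u2, u3)) (x, y) = u3 + (u0 - u1) * y / 2"
  by (intro pd_0_eqI pd_neq_0_eqI Omega_has_real_derivative; assumption?)+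

lemma gmet_diag: "gmet u i i = (\<lambda>p. 1 / (Omega u p)\<^sup>2)"
  by (rule ext) (simp add: gmet_def)

lemma gmet_off_diag: "i \<noteq> j \<Longrightarrow> gmet u i j = (\<lambda>p. 0)"
  by (simp add: gmet_def fun_eq_iff)

lemma inverse_square_has_real_derivative:
  assumes "(f has_real_derivative f') (at x)" and "f x \<noteq> 0"
  shows "((\<lambda>t. 1 / (f t)\<^sup>2) has_real_derivative - 2 * f' / (f x) ^ 3) (at x)"
  using assms by (auto intro!: derivative_eq_intros simp: power2_eq_square power3_eq_cube field_simps)

lemma pd_gmet_diag:
  assumes "Omega u p \<noteq> 0"
  shows "pd k (gmet u i i) p = - 2 * pd k (Omega u) p / (Omega u p) ^ 3"
proof -
  obtain u0 u1 u2 u3 x y where u: "u = (u0, u1, u2, u3)" and p: "p = (x, y)"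
    by (cases u, cases p)
  note \<Omega> = assms[unfolded u p]
  show ?thesis
  proof (cases "k = 0")
    case True
    show ?thesis
      unfolding gmet_diag u p True pd_Omega
      by (intro pd_0_eqI inverse_square_has_real_derivative Omega_has_real_derivative \<Omega>)
  next
    case False
    show ?thesis
      unfolding gmet_diag u p pd_Omega(2)[OF False]
      by (intro pd_neq_0_eqI[OF False] inverse_square_has_real_derivative Omega_has_real_derivative \<Omega>)
  qed
qed

section \<open>The Killing equation\<close>

(* Re (m1 + m2 * zc p) is half the divergence of the GCKV. *)
definition killing_defect :: "complex \<Rightarrow> complex \<Rightarrow> complex \<Rightarrow> real \<times> real \<times> real \<times> real \<Rightarrow> real \<times> real \<Rightarrow> real" where
  "killing_defect m0 m1 m2 u p =
     gckv m0 m1 m2 0 p * pd 0 (Omega u) p + gckv m0 m1 m2 1 p * pd 1 (Omega u) p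
     - Re (m1 + m2 * zc p) * Omega u p"

lemma lie_metric_gmet:
  assumes "Omega u p \<noteq> 0" and "i < 2" and "j < 2"
  shows "lie_metric (gckv m0 m1 m2) (gmet u) i j p =
           (if i = j then - 2 * killing_defect m0 m1 m2 u p / (Omega u p) ^ 3 else 0)"
proof -
  obtain x y where p: "p = (x, y)"
    by (cases p)
  have "i = 0 \<or> i = 1" "j = 0 \<or> j = 1"
    using assms(2,3) by auto
  then show ?thesis
    using assms(1) unfolding lie_metric_def killing_defect_def p
    by (auto simp: numeral_2_eq_2 pd_gmet_diag gmet_off_diag pd_gckv_0 pd_gckv_neq_0 gmet_def
        power2_eq_square power3_eq_cube field_simps)
qed

(* For X = [[a, b], [c, d]] the velocity at t = 0 of the Moebius maps of exp (t X) is
   b + (a - d) z - c z^2; for this X it is the coefficient m0 + m1 z + m2 z^2 / 2 of the GCKV. *)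
definition gckv_matrix :: "complex \<Rightarrow> complex \<Rightarrow> complex \<Rightarrow> cmat2" where
  "gckv_matrix m0 m1 m2 = (m1 / 2, m0, - m2 / 2, - m1 / 2)"

(* Transporting the Hermitian form Omega u along the Moebius flow of exp (t X) replaces herm u
   by its congruence under exp (t X), whose derivative at t = 0 is H X + X^H H. *)
lemma killing_defect_eq_Omega:
  "killing_defect m0 m1 m2 u p = Omega (herm_coords (mat2_congr_deriv (herm u) (gckv_matrix m0 m1 m2))) p"
proof -
  obtain u0 u1 u2 u3 x y where u: "u = (u0, u1, u2, u3)" and p: "p = (x, y)"
    by (cases u, cases p)
  show ?thesis
    unfolding u p killing_defect_def
    by (simp add: pd_Omega gckv_0 gckv_neq_0 zc_def Omega_def herm_coords_def mat2_congr_deriv_def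
        herm_def gckv_matrix_def power2_eq_square field_simps)
qed

lemma exists_small_nonroot:
  fixes \<alpha> \<beta> e :: real
  assumes "(\<alpha>, \<beta>) \<noteq> (0, 0)" and "e > 0"
  obtains t where "0 < t" "t < e" "\<alpha> + \<beta> * t \<noteq> 0"
proof -
  have "\<alpha> + \<beta> * (e / 2) \<noteq> 0 \<or> \<alpha> + \<beta> * (e / 3) \<noteq> 0"
    using assms by (auto simp: field_simps) (smt (verit) mult_eq_0_iff)
  then show ?thesis
    using that[of "e / 2"] that[of "e / 3"] assms(2) by auto
qed

lemma Omega_add_scaleR:
  "Omega (u0, u1, u2, u3) ((x, y) + t *\<^sub>R (a, b)) =
     Omega (u0, u1, u2, u3) (x, y)
     + t * ((u2 + (u0 - u1) * x / 2) * a + (u3 + (u0 - u1) * y / 2) * b + (u0 - u1) / 4 * (a\<^sup>2 + b\<^sup>2) * t)"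
  by (simp add: Omega_def power2_eq_square field_simps)

lemma closure_dom_u:
  assumes "u \<noteq> (0, 0, 0, 0)"
  shows "closure (dom_u u) = UNIV"
proof -
  obtain u0 u1 u2 u3 where u: "u = (u0, u1, u2, u3)"
    by (cases u)
  have "p \<in> closure (dom_u u)" if zero: "Omega u p = 0" for p
  proof -
    obtain x y where p: "p = (x, y)"
      by (cases p)
    define \<Omega>x \<Omega>y C where "\<Omega>x = u2 + (u0 - u1) * x / 2" and "\<Omega>y = u3 + (u0 - u1) * y / 2"
      and "C = (u0 - u1) / 4"
    obtain v where v: "v = (1, 0) \<or> v = (0, 1)" and slope: "(\<Omega>x * fst v + \<Omega>y * snd v, C) \<noteq> (0, 0)"
    proof -
      have "(\<Omega>x, C) \<noteq> (0, 0) \<or> (\<Omega>y, C) \<noteq> (0, 0)"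
        using zero assms by (auto simp: u p Omega_def \<Omega>x_def \<Omega>y_def C_def)
      then show ?thesis
        using that by fastforce
    qed
    show ?thesis
      unfolding closure_approachable
    proof (intro allI impI)
      fix e :: real
      assume "e > 0"
      then obtain t where t: "0 < t" "t < e" "\<Omega>x * fst v + \<Omega>y * snd v + C * t \<noteq> 0"
        using exists_small_nonroot[OF slope] by blast
      have "(fst v)\<^sup>2 + (snd v)\<^sup>2 = 1"
        using v by auto
      then have "Omega u (p + t *\<^sub>R v) = t * (\<Omega>x * fst v + \<Omega>y * snd v + C * t)"
        using Omega_add_scaleR[of u0 u1 u2 u3 x y t "fst v" "snd v"] zero
        unfolding u p prod.collapse \<Omega>x_def \<Omega>y_def C_def by simp
      then have "p + t *\<^sub>R v \<in> dom_u u"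
        using t by (simp add: dom_u_def)
      moreover have "dist (p + t *\<^sub>R v) p = t"
        using v t by (auto simp: dist_norm)
      ultimately show "\<exists>q\<in>dom_u u. dist q p < e"
        using t(2) by (intro bexI[of _ "p + t *\<^sub>R v"]) simp_all
    qed
  qed
  then show ?thesis
    using closure_subset by (force simp: dom_u_def)
qed

lemma Omega_eq_zero_iff: "(\<forall>p. Omega w p = 0) \<longleftrightarrow> w = (0, 0, 0, 0)"
proof
  assume zero: "\<forall>p. Omega w p = 0"
  obtain w0 w1 w2 w3 where w: "w = (w0, w1, w2, w3)"
    by (cases w)
  have "w0 + w1 = 0" "w0 + w1 + 2 * w2 + (w0 - w1) = 0" "w0 + w1 - 2 * w2 + (w0 - w1) = 0"
    "w0 + w1 + 2 * w3 + (w0 - w1) = 0"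
    using zero[rule_format, of "(0, 0)"] zero[rule_format, of "(2, 0)"] zero[rule_format, of "(-2, 0)"]
      zero[rule_format, of "(0, 2)"]
    by (simp_all add: w Omega_def)
  then show "w = (0, 0, 0, 0)"
    by (simp add: w)
qed (simp add: Omega_def)

lemma Omega_eq_zero_on_dom_u_iff:
  assumes "u \<noteq> (0, 0, 0, 0)"
  shows "(\<forall>p\<in>dom_u u. Omega w p = 0) \<longleftrightarrow> w = (0, 0, 0, 0)"
proof
  assume "\<forall>p\<in>dom_u u. Omega w p = 0"
  moreover have "continuous_on UNIV (Omega w)"
    by (cases w) (simp add: Omega_def case_prod_unfold continuous_intros)
  ultimately have "Omega w p = 0" for p
    using continuous_constant_on_closure[of "dom_u u" "Omega w" 0 p] closure_dom_u[OF assms] by auto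
  then show "w = (0, 0, 0, 0)"
    using Omega_eq_zero_iff by blast
qed (simp add: Omega_def)

lemma killing_on_gmet_iff:
  assumes "u \<noteq> (0, 0, 0, 0)"
  shows "killing_on (gckv m0 m1 m2) (gmet u) (dom_u u) \<longleftrightarrow>
           mat2_congr_deriv (herm u) (gckv_matrix m0 m1 m2) = mat2_zero"
proof -
  define K where "K = mat2_congr_deriv (herm u) (gckv_matrix m0 m1 m2)"
  have "killing_on (gckv m0 m1 m2) (gmet u) (dom_u u) \<longleftrightarrow> (\<forall>p\<in>dom_u u. killing_defect m0 m1 m2 u p = 0)"
    unfolding killing_on_def
  proof (rule ball_cong[OF refl])
    fix p
    assume "p \<in> dom_u u"
    then have \<Omega>: "Omega u p \<noteq> 0"
      by (simp add: dom_u_def)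
    show "(\<forall>i<2. \<forall>j<2. lie_metric (gckv m0 m1 m2) (gmet u) i j p = 0) \<longleftrightarrow> killing_defect m0 m1 m2 u p = 0"
    proof
      assume "\<forall>i<2. \<forall>j<2. lie_metric (gckv m0 m1 m2) (gmet u) i j p = 0"
      then have "lie_metric (gckv m0 m1 m2) (gmet u) 0 0 p = 0"
        by simp
      then show "killing_defect m0 m1 m2 u p = 0"
        using \<Omega> by (simp add: lie_metric_gmet[OF \<Omega>])
    qed (simp add: lie_metric_gmet[OF \<Omega>])
  qed
  also have "\<dots> \<longleftrightarrow> herm_coords K = (0, 0, 0, 0)"
    by (simp add: killing_defect_eq_Omega K_def Omega_eq_zero_on_dom_u_iff[OF assms])
  also have "\<dots> \<longleftrightarrow> K = mat2_zero"
  proof -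
    have "herm (herm_coords K) = K"
      by (rule herm_herm_coords) (simp add: K_def mat2_adjoint_congr_deriv)
    then show ?thesis
      by (metis herm_coords_herm herm_eq_zero_iff)
  qed
  finally show ?thesis
    unfolding K_def .
qed

section \<open>Gauss curvature of the metrics\<close>

lemma gauss_curvature_conformal:
  assumes "g 0 0 = h" and "g 1 1 = h" and "g 0 1 = (\<lambda>p. 0)" and "h p \<noteq> 0"
  shows "gauss_curvature g p =
           ((pd 0 h p)\<^sup>2 + (pd 1 h p)\<^sup>2 - h p * (pd 0 (pd 0 h) p + pd 1 (pd 1 h) p)) / (2 * (h p) ^ 3)"
  using assms(4) unfolding gauss_curvature_def Let_def assms(1-3)
  by (simp add: det3_def power2_eq_square power3_eq_cube field_simps)

lemma quotient_cube_has_real_derivative: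
  assumes "(f has_real_derivative f') (at x)" and "(g has_real_derivative g') (at x)" and "g x \<noteq> 0"
  shows "((\<lambda>t. f t / (g t) ^ 3) has_real_derivative (f' * g x - 3 * f x * g') / (g x) ^ 4) (at x)"
  using assms by (auto intro!: derivative_eq_intros simp: eval_nat_numeral field_simps)

lemma pd_pd_gmet_diag:
  assumes "Omega (u0, u1, u2, u3) p \<noteq> 0"
  shows "pd k (pd k (gmet (u0, u1, u2, u3) i i)) p =
           (6 * (pd k (Omega (u0, u1, u2, u3)) p)\<^sup>2 - (u0 - u1) * Omega (u0, u1, u2, u3) p)
           / (Omega (u0, u1, u2, u3) p) ^ 4"
proof -
  let ?\<Omega> = "Omega (u0, u1, u2, u3)"
  obtain x y where p: "p = (x, y)"
    by (cases p)
  have lin: "((\<lambda>t. - 2 * (c + (u0 - u1) * t / 2)) has_real_derivative - (u0 - u1)) (at s)" for c s :: real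
    by (auto intro!: derivative_eq_intros)
  have "open {t. ?\<Omega> (t, y) \<noteq> 0}" "open {t. ?\<Omega> (x, t) \<noteq> 0}"
    by (auto simp: Omega_def intro!: open_Collect_neq continuous_intros)
  note opens = this
  show ?thesis
  proof (cases "k = 0")
    case True
    have "((\<lambda>t. - 2 * (u2 + (u0 - u1) * t / 2) / (?\<Omega> (t, y)) ^ 3) has_real_derivative
          (6 * (u2 + (u0 - u1) * x / 2)\<^sup>2 - (u0 - u1) * ?\<Omega> (x, y)) / (?\<Omega> (x, y)) ^ 4) (at x)"
      by (rule DERIV_cong[OF quotient_cube_has_real_derivative[OF lin Omega_has_real_derivative(1)]])
        (use assms in \<open>simp_all add: p power2_eq_square field_simps\<close>)
    then have "((\<lambda>t. pd 0 (gmet (u0, u1, u2, u3) i i) (t, y)) has_real_derivative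
          (6 * (u2 + (u0 - u1) * x / 2)\<^sup>2 - (u0 - u1) * ?\<Omega> (x, y)) / (?\<Omega> (x, y)) ^ 4) (at x)"
      by (rule has_field_derivative_transform_within_open[OF _ opens(1)])
        (use assms in \<open>simp_all add: p pd_gmet_diag pd_Omega\<close>)
    then show ?thesis
      unfolding True p pd_Omega by (rule pd_0_eqI)
  next
    case False
    have "((\<lambda>t. - 2 * (u3 + (u0 - u1) * t / 2) / (?\<Omega> (x, t)) ^ 3) has_real_derivative
          (6 * (u3 + (u0 - u1) * y / 2)\<^sup>2 - (u0 - u1) * ?\<Omega> (x, y)) / (?\<Omega> (x, y)) ^ 4) (at y)"
      by (rule DERIV_cong[OF quotient_cube_has_real_derivative[OF lin Omega_has_real_derivative(2)]])
        (use assms in \<open>simp_all add: p power2_eq_square field_simps\<close>)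
    then have "((\<lambda>t. pd k (gmet (u0, u1, u2, u3) i i) (x, t)) has_real_derivative
          (6 * (u3 + (u0 - u1) * y / 2)\<^sup>2 - (u0 - u1) * ?\<Omega> (x, y)) / (?\<Omega> (x, y)) ^ 4) (at y)"
      by (rule has_field_derivative_transform_within_open[OF _ opens(2)])
        (use assms False in \<open>simp_all add: p pd_gmet_diag pd_Omega\<close>)
    then show ?thesis
      unfolding p pd_Omega(2)[OF False] by (rule pd_neq_0_eqI[OF False])
  qed
qed

lemma gauss_curvature_gmet:
  assumes "p \<in> dom_u u"
  shows "gauss_curvature (gmet u) p = lorentz_sq u"
proof -
  obtain u0 u1 u2 u3 x y where u: "u = (u0, u1, u2, u3)" and p: "p = (x, y)"
    by (cases u, cases p)
  have \<Omega>: "Omega u p \<noteq> 0"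
    using assms by (simp add: dom_u_def)
  have "gauss_curvature (gmet u) p =
          ((pd 0 (gmet u 0 0) p)\<^sup>2 + (pd 1 (gmet u 0 0) p)\<^sup>2
           - gmet u 0 0 p * (pd 0 (pd 0 (gmet u 0 0)) p + pd 1 (pd 1 (gmet u 0 0)) p))
          / (2 * (gmet u 0 0 p) ^ 3)"
    by (rule gauss_curvature_conformal) (use \<Omega> in \<open>simp_all add: gmet_diag gmet_off_diag\<close>)
  also have "\<dots> = (u0 - u1) * Omega u p - (pd 0 (Omega u) p)\<^sup>2 - (pd 1 (Omega u) p)\<^sup>2"
  proof -
    have "((- 2 * a / r ^ 3)\<^sup>2 + (- 2 * b / r ^ 3)\<^sup>2
           - 1 / r\<^sup>2 * ((6 * a\<^sup>2 - C * r) / r ^ 4 + (6 * b\<^sup>2 - C * r) / r ^ 4))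
          / (2 * (1 / r\<^sup>2) ^ 3) = C * r - a\<^sup>2 - b\<^sup>2" if "r \<noteq> 0" for r a b C :: real
      using that by (simp add: field_simps eval_nat_numeral)
    then show ?thesis
      using \<Omega> unfolding u
      by (simp only: pd_gmet_diag pd_pd_gmet_diag gmet_def simp_thms if_True)
  qed
  also have "\<dots> = lorentz_sq u"
    by (simp add: u p pd_Omega Omega_def lorentz_sq_def power2_eq_square field_simps)
  finally show ?thesis .
qed

section \<open>Normal form of the GCKV matrix\<close>

lemma mat2_det_gckv_matrix: "mat2_det (gckv_matrix m0 m1 m2) = (2 * m0 * m2 - m1\<^sup>2) / 4"
  by (simp add: gckv_matrix_def power2_eq_square field_simps)

lemma killing_set_iff:
  "u \<in> killing_set m0 m1 m2 \<longleftrightarrow>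
     u \<noteq> (0, 0, 0, 0) \<and> mat2_congr_deriv (herm u) (gckv_matrix m0 m1 m2) = mat2_zero"
  unfolding killing_set_def using killing_on_gmet_iff[of u m0 m1 m2] by auto

theorem killing_set_eq_empty:
  assumes "2 * m0 * m2 - m1\<^sup>2 \<notin> \<real>"
  shows "killing_set m0 m1 m2 = {}"
proof -
  have "Im (mat2_det (m1 / 2, m0, - m2 / 2, - (m1 / 2))) \<noteq> 0"
    using assms by (simp add: flip: gckv_matrix_def add: mat2_det_gckv_matrix complex_is_Real_iff power2_eq_square)
  then show ?thesis
    using congr_deriv_herm_traceless_eq_zero by (auto simp: killing_set_iff gckv_matrix_def)
qed

definition normal_killing_coords :: "real \<Rightarrow> real \<Rightarrow> real \<Rightarrow> real \<times> real \<times> real \<times> real" where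
  "normal_killing_coords q s1 s2 = (s1 * (q / 4 + 1), s1 * (q / 4 - 1), 0, s2)"

lemma normal_killing_coords_eq_zero_iff [simp]:
  "normal_killing_coords q s1 s2 = (0, 0, 0, 0) \<longleftrightarrow> s1 = 0 \<and> s2 = 0"
  by (auto simp: normal_killing_coords_def algebra_simps)

lemma lorentz_sq_normal_killing_coords: "lorentz_sq (normal_killing_coords q s1 s2) = s1\<^sup>2 * q - s2\<^sup>2"
  by (simp add: normal_killing_coords_def lorentz_sq_def power2_eq_square algebra_simps)

lemma congr_deriv_normal_form_eq_zero_iff:
  "mat2_congr_deriv (herm w) (0, of_real q / 4, - 1, 0) = mat2_zero \<longleftrightarrow>
     (\<exists>s1 s2. w = normal_killing_coords q s1 s2)"
proof -
  obtain w0 w1 w2 w3 where w: "w = (w0, w1, w2, w3)"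
    by (cases w)
  have "mat2_congr_deriv (herm w) (0, of_real q / 4, - 1, 0) = mat2_zero \<longleftrightarrow>
          w2 = 0 \<and> w0 + w1 = q / 4 * (w0 - w1)"
    by (simp add: w mat2_congr_deriv_def herm_def complex_eq_iff field_simps) argo
  also have "\<dots> \<longleftrightarrow> (\<exists>s1 s2. w = normal_killing_coords q s1 s2)"
  proof
    assume "w2 = 0 \<and> w0 + w1 = q / 4 * (w0 - w1)"
    then have "w = normal_killing_coords q ((w0 - w1) / 2) w3"
      by (simp add: w normal_killing_coords_def field_simps)
    then show "\<exists>s1 s2. w = normal_killing_coords q s1 s2"
      by blast
  qed (clarsimp simp: w normal_killing_coords_def, simp add: field_simps)
  finally show ?thesis .
qed

lemma killing_set_normal_form:
  assumes det: "mat2_det A = 1"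
    and intertwine: "mat2_mult A (gckv_matrix m0 m1 m2) = mat2_mult (0, of_real q / 4, - 1, 0) A"
  shows "u \<in> killing_set m0 m1 m2 \<longleftrightarrow>
           (\<exists>s1 s2. (s1, s2) \<noteq> (0, 0) \<and> herm u = mat2_congr A (herm (normal_killing_coords q s1 s2)))"
proof
  assume u: "u \<in> killing_set m0 m1 m2"
  define w where "w = herm_coords (mat2_congr (mat2_adjugate A) (herm u))"
  have "herm w = mat2_congr (mat2_adjugate A) (herm u)"
    unfolding w_def by (rule herm_herm_coords) (simp add: mat2_adjoint_congr)
  then have hu: "herm u = mat2_congr A (herm w)"
    by (simp add: mat2_congr_adjugate[OF det])
  have "mat2_congr A (mat2_congr_deriv (herm w) (0, of_real q / 4, - 1, 0)) = mat2_zero"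
    using u by (simp add: killing_set_iff hu flip: mat2_congr_deriv_congr[OF intertwine])
  then obtain s1 s2 where "w = normal_killing_coords q s1 s2"
    by (auto simp: mat2_congr_eq_zero_iff[OF det] congr_deriv_normal_form_eq_zero_iff)
  moreover have "w \<noteq> (0, 0, 0, 0)"
    using u hu by (auto simp: killing_set_iff)
  ultimately show "\<exists>s1 s2. (s1, s2) \<noteq> (0, 0) \<and> herm u = mat2_congr A (herm (normal_killing_coords q s1 s2))"
    using hu by auto
next
  assume "\<exists>s1 s2. (s1, s2) \<noteq> (0, 0) \<and> herm u = mat2_congr A (herm (normal_killing_coords q s1 s2))"
  then obtain s1 s2 where s: "(s1, s2) \<noteq> (0, 0)"
    and hu: "herm u = mat2_congr A (herm (normal_killing_coords q s1 s2))"
    by blast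
  have "mat2_congr_deriv (herm (normal_killing_coords q s1 s2)) (0, of_real q / 4, - 1, 0) = mat2_zero"
    using congr_deriv_normal_form_eq_zero_iff by blast
  then have "mat2_congr_deriv (herm u) (gckv_matrix m0 m1 m2) = mat2_zero"
    by (simp add: hu mat2_congr_deriv_congr[OF intertwine])
  moreover have "u \<noteq> (0, 0, 0, 0)"
  proof
    assume "u = (0, 0, 0, 0)"
    then have "mat2_congr A (herm (normal_killing_coords q s1 s2)) = mat2_zero"
      using hu by simp
    then show False
      using s by (simp add: mat2_congr_eq_zero_iff[OF det])
  qed
  ultimately show "u \<in> killing_set m0 m1 m2"
    by (simp add: killing_set_iff)
qed

(* The bottom row (c, d) is free; A X = Y A forces the top row of A to be -(c, d) X. *)
lemma gckv_matrix_intertwine: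
  "mat2_mult ((d * m2 - c * m1) / 2, d * m1 / 2 - c * m0, c, d) (gckv_matrix m0 m1 m2) =
   mat2_mult (0, (2 * m0 * m2 - m1\<^sup>2) / 4, - 1, 0) ((d * m2 - c * m1) / 2, d * m1 / 2 - c * m0, c, d)"
  by (simp add: gckv_matrix_def power2_eq_square field_simps)

lemma mat2_det_normalizing:
  "mat2_det ((d * m2 - c * m1) / 2, d * m1 / 2 - c * m0, c, d) = d\<^sup>2 * m2 / 2 - c * d * m1 + c\<^sup>2 * m0"
  by (simp add: power2_eq_square field_simps)

theorem killing_set_classification:
  assumes real: "2 * m0 * m2 - m1\<^sup>2 \<in> \<real>" and norm: "d\<^sup>2 * m2 / 2 - c * d * m1 + c\<^sup>2 * m0 = 1"
  defines "a \<equiv> (d * m2 - c * m1) / 2" and "b \<equiv> d * m1 / 2 - c * m0" and "q \<equiv> Re (2 * m0 * m2 - m1\<^sup>2)"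
  shows "u \<in> killing_set m0 m1 m2 \<longleftrightarrow>
           (\<exists>s1 s2. (s1, s2) \<noteq> (0, 0) \<and> eq_OT a b c d u (normal_killing_coords q s1 s2))"
    and "eq_OT a b c d u (normal_killing_coords q s1 s2) \<Longrightarrow> p \<in> dom_u u \<Longrightarrow>
           gauss_curvature (gmet u) p = s1\<^sup>2 * q - s2\<^sup>2"
proof -
  have det: "mat2_det (a, b, c, d) = 1"
    using norm by (simp only: a_def b_def mat2_det_normalizing)
  have "complex_of_real q = 2 * m0 * m2 - m1\<^sup>2"
    using real by (simp add: q_def complex_is_Real_iff complex_eq_iff)
  then have intertwine:
    "mat2_mult (a, b, c, d) (gckv_matrix m0 m1 m2) = mat2_mult (0, of_real q / 4, - 1, 0) (a, b, c, d)"
    unfolding a_def b_def gckv_matrix_intertwine by simp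
  show "u \<in> killing_set m0 m1 m2 \<longleftrightarrow>
          (\<exists>s1 s2. (s1, s2) \<noteq> (0, 0) \<and> eq_OT a b c d u (normal_killing_coords q s1 s2))"
    unfolding eq_OT_iff_congr by (rule killing_set_normal_form[OF det intertwine])
  show "gauss_curvature (gmet u) p = s1\<^sup>2 * q - s2\<^sup>2"
    if "eq_OT a b c d u (normal_killing_coords q s1 s2)" and "p \<in> dom_u u"
    using that lorentz_sq_congr[OF det]
    by (simp add: eq_OT_iff_congr gauss_curvature_gmet lorentz_sq_normal_killing_coords)
qed

theorem theorem9p1:
  fixes m0 m1 m2 :: complex
  assumes nonzero: "(m0, m1, m2) \<noteq> (0, 0, 0)"
  shows "(2 * m0 * m2 - m1^2 \<notin> \<real> \<longrightarrow> killing_set m0 m1 m2 = {})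
       \<and> (2 * m0 * m2 - m1^2 \<in> \<real> \<longrightarrow>
           (\<forall>c d :: complex. d^2 * m2 / 2 - c * d * m1 + c^2 * m0 = 1 \<longrightarrow>
             (let a = (d * m2 - c * m1) / 2;
                  b = d * m1 / 2 - c * m0;
                  q = Re (2 * m0 * m2 - m1^2);
                  w = (\<lambda>s1 s2 :: real. (s1 * (q / 4 + 1), s1 * (q / 4 - 1), 0, s2))
              in (\<forall>u. u \<in> killing_set m0 m1 m2 \<longleftrightarrow>
                        (\<exists>s1 s2. (s1, s2) \<noteq> (0, 0) \<and> eq_OT a b c d u (w s1 s2)))
               \<and> (\<forall>u s1 s2. (s1, s2) \<noteq> (0, 0) \<and> eq_OT a b c d u (w s1 s2) \<longrightarrow>
                        (\<forall>p\<in>dom_u u. gauss_curvature (gmet u) p = s1^2 * q - s2^2)))))"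
  unfolding Let_def normal_killing_coords_def[symmetric]
  by (intro conjI impI allI ballI; (elim conjE)?)
    (simp_all only: killing_set_eq_empty killing_set_classification not_False_eq_True)

end
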